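(* Let $\langle A,\preccurlyeq\rangle$ be a pre-ordered set and let $x\in LO(A,\preccurlyeq)$. The following are equivalent: (i) $x$ is minimal, i.e. there is no $y\in LO(A,\preccurlyeq)$ with $y\subsetneq x$; (ii) for every $a\in x$, $x=pr(a)$; (iii) for every $a\in x$, $x=[a]$.
   Context: A pre-ordering $\preccurlyeq$ on $A$ is a reflexive and transitive binary relation. For $a\in A$, $pr(a)=\{b\in A: b\preccurlyeq a\}$. $LO(A,\preccurlyeq)$ is the set of all nonempty subsets $x\subseteq A$ such that $pr(a)\subseteq x$ for every $a\in x$ (nonempty open sets of the lower topology). Write $a\sim b$ iff $a\preccurlyeq b$ and $b\preccurlyeq a$; this is an equivalence relation and $[a]$ denotes the $\sim$-equivalence class of $a$. *)

theory Defs
  imports Main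
begin

text \<open>Preorder given as a relation r on carrier A (use library preorder_on A r).
  (b,a) \<in> r means b \<preccurlyeq> a.\<close>

definition pr :: "'a set \<Rightarrow> 'a rel \<Rightarrow> 'a \<Rightarrow> 'a set" where
  "pr A r a = {b \<in> A. (b, a) \<in> r}"

definition LO :: "'a set \<Rightarrow> 'a rel \<Rightarrow> 'a set set" where
  "LO A r = {x. x \<subseteq> A \<and> x \<noteq> {} \<and> (\<forall>a\<in>x. pr A r a \<subseteq> x)}"

definition eqclass :: "'a set \<Rightarrow> 'a rel \<Rightarrow> 'a \<Rightarrow> 'a set" where
  "eqclass A r a = {b \<in> A. (a, b) \<in> r \<and> (b, a) \<in> r}"

end

theory Submission
  imports Defs
begin

text \<open>Every principal down-set \<open>pr a\<close> is itself a nonempty open set, so a minimal open set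
  must coincide with \<open>pr a\<close> for each of its points; conversely any open set contains the
  down-set of one of its points. When \<open>x = pr a\<close> for all \<open>a \<in> x\<close>, any two points of \<open>x\<close> lie
  below each other, which makes \<open>x\<close> an equivalence class; and an open equivalence class
  \<open>[a]\<close> contains \<open>pr a\<close>, which always contains \<open>[a]\<close>.\<close>

lemma eqclass_subset_pr: "eqclass A r a \<subseteq> pr A r a"
  unfolding eqclass_def pr_def by blast

lemma LO_pr_subset: "x \<in> LO A r \<Longrightarrow> a \<in> x \<Longrightarrow> pr A r a \<subseteq> x"
  unfolding LO_def by blast

lemma pr_in_LO:
  assumes "refl_on A r" and "trans r" and "a \<in> A"
  shows "pr A r a \<in> LO A r"
proof -
  have "a \<in> pr A r a"
    using assms(1,3) by (simp add: pr_def refl_onD)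
  moreover have "pr A r b \<subseteq> pr A r a" if "b \<in> pr A r a" for b
    using that assms(2) unfolding pr_def by (blast dest: transD)
  ultimately show ?thesis
    unfolding LO_def by (auto simp: pr_def)
qed

lemma LO_minimal_iff_pr:
  assumes "refl_on A r" and "trans r" and x: "x \<in> LO A r"
  shows "(\<nexists>y. y \<in> LO A r \<and> y \<subset> x) \<longleftrightarrow> (\<forall>a\<in>x. x = pr A r a)"
proof
  assume minimal: "\<nexists>y. y \<in> LO A r \<and> y \<subset> x"
  show "\<forall>a\<in>x. x = pr A r a"
  proof
    fix a assume "a \<in> x"
    then have "a \<in> A"
      using x unfolding LO_def by blast
    then have "pr A r a \<in> LO A r"
      by (rule pr_in_LO[OF assms(1,2)])
    moreover have "pr A r a \<subseteq> x"
      by (rule LO_pr_subset[OF x \<open>a \<in> x\<close>])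
    ultimately show "x = pr A r a"
      using minimal by blast
  qed
next
  assume principal: "\<forall>a\<in>x. x = pr A r a"
  show "\<nexists>y. y \<in> LO A r \<and> y \<subset> x"
  proof
    assume "\<exists>y. y \<in> LO A r \<and> y \<subset> x"
    then obtain y where y: "y \<in> LO A r" "y \<subset> x"
      by blast
    then obtain a where "a \<in> y"
      unfolding LO_def by blast
    have "pr A r a \<subseteq> y"
      by (rule LO_pr_subset[OF y(1) \<open>a \<in> y\<close>])
    moreover have "x = pr A r a"
      using principal y(2) \<open>a \<in> y\<close> by blast
    ultimately show False
      using y(2) by blast
  qed
qed

lemma LO_pr_iff_eqclass:
  assumes x: "x \<in> LO A r"
  shows "(\<forall>a\<in>x. x = pr A r a) \<longleftrightarrow> (\<forall>a\<in>x. x = eqclass A r a)"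
proof
  assume principal: "\<forall>a\<in>x. x = pr A r a"
  show "\<forall>a\<in>x. x = eqclass A r a"
  proof
    fix a assume "a \<in> x"
    from principal this have x_eq: "x = pr A r a"
      by (rule bspec)
    have "x \<subseteq> eqclass A r a"
    proof
      fix b assume "b \<in> x"
      from principal this have "x = pr A r b"
        by (rule bspec)
      with \<open>a \<in> x\<close> \<open>b \<in> x\<close> x_eq have "b \<in> pr A r a" and "a \<in> pr A r b"
        by simp_all
      then show "b \<in> eqclass A r a"
        unfolding pr_def eqclass_def by simp
    qed
    moreover have "eqclass A r a \<subseteq> x"
      using x_eq by (simp add: eqclass_subset_pr)
    ultimately show "x = eqclass A r a"
      by (rule subset_antisym)
  qed
next
  assume classes: "\<forall>a\<in>x. x = eqclass A r a"
  show "\<forall>a\<in>x. x = pr A r a"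
  proof
    fix a assume "a \<in> x"
    from classes this have "x = eqclass A r a"
      by (rule bspec)
    then have "x \<subseteq> pr A r a"
      using eqclass_subset_pr by simp
    with LO_pr_subset[OF x \<open>a \<in> x\<close>] show "x = pr A r a"
      by (rule subset_antisym[rotated])
  qed
qed

theorem lemma2p2:
  fixes A :: "'a set" and r :: "'a rel" and x :: "'a set"
  assumes "preorder_on A r"
    and "x \<in> LO A r"
  shows "((\<nexists>y. y \<in> LO A r \<and> y \<subset> x) \<longleftrightarrow> (\<forall>a\<in>x. x = pr A r a))
       \<and> ((\<forall>a\<in>x. x = pr A r a) \<longleftrightarrow> (\<forall>a\<in>x. x = eqclass A r a))"
proof -
  have "refl_on A r" and "trans r"
    using assms(1) unfolding preorder_on_def by blast+
  then show ?thesis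
    using LO_minimal_iff_pr[OF _ _ assms(2)] LO_pr_iff_eqclass[OF assms(2)] by (intro conjI)
qed

end
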